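(* Let $p,q,r\in\mathbb{Z}_{\ge 0}$ with $p+q>0$, $p+r>1$, $q+r>1$ and $p+q+r>2$. Then $$R(p,q,r)=\sum_{a=0}^{p-1}\binom{q+a-1}{a}\,\zeta(\overline{r+q+a},\overline{p-a})+\sum_{b=0}^{q-1}\binom{p+b-1}{b}\,\zeta(r+p+b,\overline{q-b}),$$ $$S(p,q,r)=\sum_{a=0}^{p-1}\binom{q+a-1}{a}\,\zeta(\overline{r+q+a},p-a)+\sum_{b=0}^{q-1}\binom{p+b-1}{b}\,\zeta(\overline{r+p+b},q-b).$$
   Context: Define $$R(p,q,r):=\sum_{m,n=1}^\infty\frac{(-1)^n}{m^p n^q (m+n)^r},\qquad S(p,q,r):=\sum_{m,n=1}^\infty\frac{(-1)^{m+n}}{m^p n^q (m+n)^r}.$$ For positive integers $s,t$ define the alternating double zeta values $$\zeta(\overline{s},\overline{t}):=\sum_{m>n\ge1}\frac{(-1)^{m+n}}{m^s n^t},\quad \zeta(\overline{s},t):=\sum_{m>n\ge1}\frac{(-1)^{m}}{m^s n^t},\quad \zeta(s,\overline{t}):=\sum_{m>n\ge1}\frac{(-1)^{n}}{m^s n^t}.$$ Empty sums are $0$; $\binom{-1}{0}=1$. *)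

theory Defs
  imports "HOL-Analysis.Analysis"
begin

text \<open>Tornheim-type alternating double sums over m,n >= 1 (as unordered sums over
  the index set of pairs; absolutely convergent under the theorem's hypotheses).\<close>

definition R :: "nat \<Rightarrow> nat \<Rightarrow> nat \<Rightarrow> real" where
  "R p q r = (\<Sum>\<^sub>\<infinity>(m,n)\<in>{1..}\<times>{1..}.
      (-1) ^ n / (real m ^ p * real n ^ q * real (m + n) ^ r))"

definition S :: "nat \<Rightarrow> nat \<Rightarrow> nat \<Rightarrow> real" where
  "S p q r = (\<Sum>\<^sub>\<infinity>(m,n)\<in>{1..}\<times>{1..}.
      (-1) ^ (m + n) / (real m ^ p * real n ^ q * real (m + n) ^ r))"

definition zeta_bb :: "nat \<Rightarrow> nat \<Rightarrow> real" where
  "zeta_bb s t = (\<Sum>\<^sub>\<infinity>(m,n)\<in>{(m,n). m > n \<and> n \<ge> 1}.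
      (-1) ^ (m + n) / (real m ^ s * real n ^ t))"

definition zeta_bu :: "nat \<Rightarrow> nat \<Rightarrow> real" where
  "zeta_bu s t = (\<Sum>\<^sub>\<infinity>(m,n)\<in>{(m,n). m > n \<and> n \<ge> 1}.
      (-1) ^ m / (real m ^ s * real n ^ t))"

definition zeta_ub :: "nat \<Rightarrow> nat \<Rightarrow> real" where
  "zeta_ub s t = (\<Sum>\<^sub>\<infinity>(m,n)\<in>{(m,n). m > n \<and> n \<ge> 1}.
      (-1) ^ n / (real m ^ s * real n ^ t))"

end

theory Submission
  imports Defs
begin

(* Put x = 1/m, y = 1/n, z = 1/(m+n); then x*y = z*(x+y), and iterating
   this relation gives the partial-fraction expansion
     x^p y^q = sum_{a<p} C(q+a-1,a) x^(p-a) z^(q+a) + sum_{b<q} C(p+b-1,b) y^(q-b) z^(p+b).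
   Multiplying by eps(m,n)/(m+n)^r splits every term of the Tornheim-type sum into finitely
   many terms of the shape eps(m,n) / ((m+n)^s m^t) or eps(m,n) / ((m+n)^s n^t).
   Substituting M = m+n turns the sum of each such family over m,n >= 1 into a double
   zeta-type sum over M > m >= 1, which converges absolutely as soon as s >= 2, t >= 1
   (majorant (M m)^(-3/2)).  Absolute convergence lets the infinite sum be exchanged
   with the finite sum of the decomposition. *)

(* The part of the partial-fraction expansion of x^p y^q (under x y = z (x + y))
   that carries powers of x:  sum_{a<p} C(q+a-1,a) x^(p-a) z^(q+a). *)
definition partial_fraction_part :: "'a::comm_ring_1 \<Rightarrow> 'a \<Rightarrow> nat \<Rightarrow> nat \<Rightarrow> 'a" where
  "partial_fraction_part x z p q = (\<Sum>a<p. of_nat ((q + a - 1) choose a) * x ^ (p - a) * z ^ (q + a))"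

lemma partial_fraction_part_zero_left [simp]: "partial_fraction_part x z 0 q = 0"
  by (simp add: partial_fraction_part_def)

(* With q = 0 only the term a = 0 survives: the expansion of x^p is x^p itself. *)
lemma partial_fraction_part_zero_right:
  assumes "p > 0"
  shows "partial_fraction_part x z p 0 = x ^ p"
proof -
  obtain p' where p: "p = Suc p'" using assms by (cases p) auto
  have "partial_fraction_part x z p 0 = x ^ p + (\<Sum>a<p'. of_nat (a choose Suc a) * x ^ (p' - a) * z ^ Suc a)"
    unfolding partial_fraction_part_def p by (subst sum.lessThan_Suc_shift) simp
  then show ?thesis by (simp add: binomial_eq_0)
qed

(* Pascal's rule for the coefficients yields the recursion that mirrors
   x^(p+1) y^(q+1) = z x^(p+1) y^q + z x^p y^(q+1). *)
lemma partial_fraction_part_Suc_Suc: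
  "partial_fraction_part x z (Suc p) (Suc q) = z * partial_fraction_part x z (Suc p) q + z * partial_fraction_part x z p (Suc q)"
proof -
  have pascal: "of_nat ((q + Suc a) choose Suc a) = (of_nat ((q + a) choose Suc a) + of_nat ((q + a) choose a) :: 'a)"
    for a by simp
  have "partial_fraction_part x z (Suc p) (Suc q) = x ^ Suc p * z ^ Suc q +
     (\<Sum>a<p. of_nat ((q + Suc a) choose Suc a) * x ^ (p - a) * z ^ (Suc q + Suc a))"
    unfolding partial_fraction_part_def by (subst sum.lessThan_Suc_shift) simp
  also have "\<dots> = (x ^ Suc p * z ^ Suc q +
     (\<Sum>a<p. of_nat ((q + a) choose Suc a) * x ^ (p - a) * z ^ (Suc q + Suc a))) +
     (\<Sum>a<p. of_nat ((q + a) choose a) * x ^ (p - a) * z ^ (Suc q + Suc a))"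
    by (simp only: pascal distrib_right sum.distrib add.assoc)
  also have "x ^ Suc p * z ^ Suc q +
     (\<Sum>a<p. of_nat ((q + a) choose Suc a) * x ^ (p - a) * z ^ (Suc q + Suc a))
     = z * partial_fraction_part x z (Suc p) q"
    unfolding partial_fraction_part_def by (subst sum.lessThan_Suc_shift) (simp add: sum_distrib_left algebra_simps)
  also have "(\<Sum>a<p. of_nat ((q + a) choose a) * x ^ (p - a) * z ^ (Suc q + Suc a))
     = z * partial_fraction_part x z p (Suc q)"
    unfolding partial_fraction_part_def by (simp add: sum_distrib_left algebra_simps)
  finally show ?thesis .
qed

lemma partial_fraction_power:
  fixes x y z :: "'a::comm_ring_1"
  assumes rel: "x * y = z * (x + y)" and "p + q > 0"
  shows "x ^ p * y ^ q = partial_fraction_part x z p q + partial_fraction_part y z q p"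
  using assms(2)
proof (induction "p + q" arbitrary: p q rule: less_induct)
  case less
  show ?case
  proof (cases "p = 0 \<or> q = 0")
    case True
    then show ?thesis using less.prems by (auto simp: partial_fraction_part_zero_right)
  next
    case False
    then obtain p' q' where pq: "p = Suc p'" "q = Suc q'" by (meson not0_implies_Suc)
    have "x ^ p * y ^ q = x ^ p' * y ^ q' * (x * y)" by (simp add: pq algebra_simps)
    also have "\<dots> = z * (x ^ p * y ^ q') + z * (x ^ p' * y ^ q)"
      by (simp add: rel pq algebra_simps)
    also have "x ^ p * y ^ q' = partial_fraction_part x z p q' + partial_fraction_part y z q' p"
      using less.hyps[of p q'] pq by simp
    also have "x ^ p' * y ^ q = partial_fraction_part x z p' q + partial_fraction_part y z q p'"
      using less.hyps[of p' q] pq by simp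
    finally show ?thesis
      using partial_fraction_part_Suc_Suc[of x z p' q'] partial_fraction_part_Suc_Suc[of y z q' p'] pq
      by (simp add: algebra_simps)
  qed
qed

lemma tornheim_term_decomposition:
  fixes m n :: nat and e :: real
  assumes "m \<ge> 1" "n \<ge> 1" "p + q > 0"
  shows "e / (real m ^ p * real n ^ q * real (m + n) ^ r) =
     (\<Sum>a<p. real ((q + a - 1) choose a) * (e / (real (m + n) ^ (r + q + a) * real m ^ (p - a))))
   + (\<Sum>b<q. real ((p + b - 1) choose b) * (e / (real (m + n) ^ (r + p + b) * real n ^ (q - b))))"
proof -
  let ?x = "1 / real m" and ?y = "1 / real n" and ?z = "1 / real (m + n)"
  let ?c = "e / real (m + n) ^ r"
  have nz: "real m \<noteq> 0" "real n \<noteq> 0" using assms by auto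
  have rel: "?x * ?y = ?z * (?x + ?y)" using assms by (simp add: field_simps)
  have rescale: "?c * (k * (1 / u) ^ i * ?z ^ j) = k * (e / (real (m + n) ^ (r + j) * u ^ i))"
    if "u \<noteq> 0" for u k :: real and i j
    using that assms by (simp add: power_add field_simps)
  have "e / (real m ^ p * real n ^ q * real (m + n) ^ r) = ?c * (?x ^ p * ?y ^ q)"
    using assms by (simp add: field_simps)
  also have "\<dots> = ?c * partial_fraction_part ?x ?z p q + ?c * partial_fraction_part ?y ?z q p"
    by (simp add: partial_fraction_power[OF rel assms(3)] distrib_left)
  finally show ?thesis
    unfolding partial_fraction_part_def sum_distrib_left add.assoc
    by (simp only: rescale nz not_False_eq_True)
qed

(* The majorant for double zeta-type sums: sum_n n^(-3/2) converges ... *)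
lemma summable_on_powr_three_halves: "(\<lambda>n::nat. real n powr -(3/2)) summable_on UNIV"
  by (subst summable_on_UNIV_nonneg_real_iff) (auto simp: summable_real_powr_iff)

lemma summable_on_powr_three_halves_pairs:
  "(\<lambda>(M::nat, m::nat). real M powr -(3/2) * real m powr -(3/2)) summable_on UNIV \<times> UNIV"
proof (rule summable_on_SigmaI)
  let ?\<sigma> = "\<Sum>\<^sub>\<infinity>n::nat. real n powr -(3/2)"
  show "((\<lambda>m. case (M, m) of (M, m) \<Rightarrow> real M powr -(3/2) * real m powr -(3/2))
          has_sum real M powr -(3/2) * ?\<sigma>) UNIV" for M :: nat
    using has_sum_cmult_right[OF has_sum_infsum[OF summable_on_powr_three_halves]] by simp
  show "(\<lambda>M::nat. real M powr -(3/2) * ?\<sigma>) summable_on UNIV"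
    by (rule summable_on_cmult_left[OF summable_on_powr_three_halves])
qed auto

(* For 1 <= m <= M, s >= 2, t >= 1:  1/(M^s m^t) <= 1/(M^2 m) <= (M m)^(-3/2). *)
lemma double_zeta_majorant:
  fixes M m s t :: nat
  assumes "1 \<le> m" "m \<le> M" "2 \<le> s" "1 \<le> t"
  shows "1 / (real M ^ s * real m ^ t) \<le> real M powr -(3/2) * real m powr -(3/2)"
proof -
  let ?x = "real M" and ?y = "real m"
  have y1: "1 \<le> ?y" and yx: "?y \<le> ?x" using assms by auto
  have split_y: "?y powr (3/2) = ?y powr (1/2) * ?y"
    using powr_mult_base[of ?y "1/2"] by (simp add: mult.commute)
  have join_x: "?x powr (3/2) * ?x powr (1/2) = ?x ^ 2"
    using powr_add[of ?x "3/2" "1/2", symmetric] y1 yx by simp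
  have "?x powr (3/2) * ?y powr (3/2) = ?x powr (3/2) * ?y powr (1/2) * ?y"
    by (simp add: split_y)
  also have "\<dots> \<le> ?x powr (3/2) * ?x powr (1/2) * ?y"
    using y1 yx by (intro mult_right_mono mult_left_mono powr_mono2) auto
  also have "\<dots> = ?x ^ 2 * ?y"
    by (simp add: join_x)
  also have "\<dots> \<le> ?x ^ s * ?y ^ t"
  proof (rule mult_mono)
    show "?x ^ 2 \<le> ?x ^ s" using assms y1 yx by (intro power_increasing) auto
    show "?y \<le> ?y ^ t" using power_increasing[of 1 t ?y] assms y1 by simp
  qed auto
  finally have bound: "?x powr (3/2) * ?y powr (3/2) \<le> ?x ^ s * ?y ^ t" .
  have "1 / (?x ^ s * ?y ^ t) = inverse (?x ^ s * ?y ^ t)" by (simp add: inverse_eq_divide)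
  also have "\<dots> \<le> inverse (?x powr (3/2) * ?y powr (3/2))"
    using bound y1 yx by (intro le_imp_inverse_le) auto
  also have "\<dots> = ?x powr -(3/2) * ?y powr -(3/2)" by (simp add: powr_minus)
  finally show ?thesis .
qed

abbreviation positive_pairs :: "(nat \<times> nat) set" where
  "positive_pairs \<equiv> {1..} \<times> {1..}"

abbreviation descending_pairs :: "(nat \<times> nat) set" where
  "descending_pairs \<equiv> {(M, m). m < M \<and> 1 \<le> m}"

lemma double_zeta_summable:
  fixes e :: "nat \<Rightarrow> nat \<Rightarrow> real"
  assumes "2 \<le> s" "1 \<le> t" "\<And>M m. \<bar>e M m\<bar> \<le> 1"
  shows "(\<lambda>(M, m). e M m / (real M ^ s * real m ^ t)) summable_on descending_pairs"
proof -
  let ?g = "\<lambda>(M::nat, m::nat). real M powr -(3/2) * real m powr -(3/2)"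
  have "(\<lambda>x. norm ((\<lambda>(M, m). e M m / (real M ^ s * real m ^ t)) x)) summable_on descending_pairs"
  proof (rule Infinite_Sum.abs_summable_on_comparison_test')
    show "?g summable_on descending_pairs"
      by (rule summable_on_subset[OF summable_on_powr_three_halves_pairs]) auto
  next
    fix x assume "x \<in> descending_pairs"
    then obtain M m where x: "x = (M, m)" "m < M" "1 \<le> m" by auto
    have "\<bar>e M m / (real M ^ s * real m ^ t)\<bar> \<le> 1 / (real M ^ s * real m ^ t)"
      using assms(3)[of M m] x by (simp add: divide_right_mono)
    also have "\<dots> \<le> ?g (M, m)"
      using double_zeta_majorant[of m M s t] x assms by simp
    finally show "norm ((\<lambda>(M, m). e M m / (real M ^ s * real m ^ t)) x) \<le> ?g x"
      by (simp add: x)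
  qed
  then show ?thesis
    by (rule summable_on_iff_abs_summable_on_real[THEN iffD2])
qed

lemma has_sum_reindex_first:
  fixes G :: "nat \<Rightarrow> nat \<Rightarrow> real"
  shows "((\<lambda>(m, n). G (m + n) m) has_sum v) positive_pairs \<longleftrightarrow>
         ((\<lambda>(M, m). G M m) has_sum v) descending_pairs"
proof -
  have "bij_betw (\<lambda>(m, n). (m + n, m)) positive_pairs descending_pairs"
    by (rule bij_betw_byWitness[where f' = "\<lambda>(M, m). (m, M - m)"]) auto
  from has_sum_reindex_bij_betw[OF this, of "\<lambda>(M, m). G M m"] show ?thesis
    by (simp add: case_prod_beta')
qed

lemma has_sum_reindex_second:
  fixes G :: "nat \<Rightarrow> nat \<Rightarrow> real"
  shows "((\<lambda>(m, n). G (m + n) n) has_sum v) positive_pairs \<longleftrightarrow>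
         ((\<lambda>(M, n). G M n) has_sum v) descending_pairs"
proof -
  have "bij_betw (\<lambda>(m, n). (m + n, n)) positive_pairs descending_pairs"
    by (rule bij_betw_byWitness[where f' = "\<lambda>(M, n). (M - n, n)"]) auto
  from has_sum_reindex_bij_betw[OF this, of "\<lambda>(M, n). G M n"] show ?thesis
    by (simp add: case_prod_beta')
qed

lemma has_sum_finite_sum:
  fixes f :: "'i \<Rightarrow> 'a \<Rightarrow> 'b::topological_comm_monoid_add"
  assumes "finite I" "\<And>i. i \<in> I \<Longrightarrow> (f i has_sum s i) A"
  shows "((\<lambda>x. \<Sum>i\<in>I. f i x) has_sum (\<Sum>i\<in>I. s i)) A"
  using assms by (induction I rule: finite_induct) (auto intro: has_sum_add)

(* The hypotheses q + r > 1
   and p + r > 1 ensure every double zeta sum produced has first exponent >= 2. *)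
lemma tornheim_sum_decomposition:
  fixes \<epsilon> \<epsilon>\<^sub>1 \<epsilon>\<^sub>2 :: "nat \<Rightarrow> nat \<Rightarrow> real"
  assumes pq: "p + q > 0" and qr: "q + r > 1" and pr: "p + r > 1"
    and bounded: "\<And>M m. \<bar>\<epsilon>\<^sub>1 M m\<bar> \<le> 1" "\<And>M n. \<bar>\<epsilon>\<^sub>2 M n\<bar> \<le> 1"
    and via_first: "\<And>m n. \<epsilon> m n = \<epsilon>\<^sub>1 (m + n) m"
    and via_second: "\<And>m n. \<epsilon> m n = \<epsilon>\<^sub>2 (m + n) n"
  shows "(\<Sum>\<^sub>\<infinity>(m, n)\<in>positive_pairs. \<epsilon> m n / (real m ^ p * real n ^ q * real (m + n) ^ r)) =
     (\<Sum>a<p. real ((q + a - 1) choose a) *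
        (\<Sum>\<^sub>\<infinity>(M, m)\<in>descending_pairs. \<epsilon>\<^sub>1 M m / (real M ^ (r + q + a) * real m ^ (p - a))))
   + (\<Sum>b<q. real ((p + b - 1) choose b) *
        (\<Sum>\<^sub>\<infinity>(M, n)\<in>descending_pairs. \<epsilon>\<^sub>2 M n / (real M ^ (r + p + b) * real n ^ (q - b))))"
    (is "_ = (\<Sum>a<p. ?C\<^sub>1 a * ?Z\<^sub>1 a) + (\<Sum>b<q. ?C\<^sub>2 b * ?Z\<^sub>2 b)")
proof -
  have first: "((\<lambda>(m, n). \<epsilon> m n / (real (m + n) ^ (r + q + a) * real m ^ (p - a)))
      has_sum ?Z\<^sub>1 a) positive_pairs" if "a < p" for a
  proof -
    have "(\<lambda>(M, m). \<epsilon>\<^sub>1 M m / (real M ^ (r + q + a) * real m ^ (p - a))) summable_on descending_pairs"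
      using that qr by (intro double_zeta_summable bounded) auto
    then show ?thesis
      unfolding via_first
      by (rule has_sum_reindex_first[where G = "\<lambda>M m. \<epsilon>\<^sub>1 M m / (real M ^ (r + q + a) * real m ^ (p - a))",
            THEN iffD2, OF has_sum_infsum])
  qed
  have second: "((\<lambda>(m, n). \<epsilon> m n / (real (m + n) ^ (r + p + b) * real n ^ (q - b)))
      has_sum ?Z\<^sub>2 b) positive_pairs" if "b < q" for b
  proof -
    have "(\<lambda>(M, n). \<epsilon>\<^sub>2 M n / (real M ^ (r + p + b) * real n ^ (q - b))) summable_on descending_pairs"
      using that pr by (intro double_zeta_summable bounded) auto
    then show ?thesis
      unfolding via_second
      by (rule has_sum_reindex_second[where G = "\<lambda>M n. \<epsilon>\<^sub>2 M n / (real M ^ (r + p + b) * real n ^ (q - b))",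
            THEN iffD2, OF has_sum_infsum])
  qed
  have "((\<lambda>x. (\<Sum>a<p. ?C\<^sub>1 a * (case x of (m, n) \<Rightarrow> \<epsilon> m n / (real (m + n) ^ (r + q + a) * real m ^ (p - a))))
            + (\<Sum>b<q. ?C\<^sub>2 b * (case x of (m, n) \<Rightarrow> \<epsilon> m n / (real (m + n) ^ (r + p + b) * real n ^ (q - b)))))
      has_sum (\<Sum>a<p. ?C\<^sub>1 a * ?Z\<^sub>1 a) + (\<Sum>b<q. ?C\<^sub>2 b * ?Z\<^sub>2 b)) positive_pairs"
    by (intro has_sum_add has_sum_finite_sum has_sum_cmult_right first second) auto
  also have "?this \<longleftrightarrow> ((\<lambda>(m, n). \<epsilon> m n / (real m ^ p * real n ^ q * real (m + n) ^ r))
      has_sum (\<Sum>a<p. ?C\<^sub>1 a * ?Z\<^sub>1 a) + (\<Sum>b<q. ?C\<^sub>2 b * ?Z\<^sub>2 b)) positive_pairs"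
  proof (intro has_sum_cong)
    fix x assume "x \<in> positive_pairs"
    then obtain m n where "x = (m, n)" "m \<ge> 1" "n \<ge> 1" by auto
    then show "(\<Sum>a<p. ?C\<^sub>1 a * (case x of (m, n) \<Rightarrow> \<epsilon> m n / (real (m + n) ^ (r + q + a) * real m ^ (p - a))))
            + (\<Sum>b<q. ?C\<^sub>2 b * (case x of (m, n) \<Rightarrow> \<epsilon> m n / (real (m + n) ^ (r + p + b) * real n ^ (q - b))))
        = (case x of (m, n) \<Rightarrow> \<epsilon> m n / (real m ^ p * real n ^ q * real (m + n) ^ r))"
      using tornheim_term_decomposition[OF _ _ pq, of m n "\<epsilon> m n" r] by simp
  qed
  finally show ?thesis
    by (rule infsumI)
qed

(* Sign bookkeeping: (-1)^n = (-1)^(M + m) with M = m + n. *)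
lemma minus_one_power_reflect: "(-1::real) ^ n = (-1) ^ (m + n + m)"
proof -
  have "m + n + m = n + 2 * m" by simp
  then show ?thesis by (simp add: power_add power_mult)
qed

(* The theorem: R uses the signs (-1)^n, S uses (-1)^(m+n) = (-1)^M. *)
theorem corollary2:
  fixes p q r :: nat
  assumes "p + q > 0" and "p + r > 1" and "q + r > 1" and "p + q + r > 2"
  shows "R p q r =
           (\<Sum>a<p. real ((q + a - 1) choose a) * zeta_bb (r + q + a) (p - a))
         + (\<Sum>b<q. real ((p + b - 1) choose b) * zeta_ub (r + p + b) (q - b))
       \<and> S p q r =
           (\<Sum>a<p. real ((q + a - 1) choose a) * zeta_bu (r + q + a) (p - a))
         + (\<Sum>b<q. real ((p + b - 1) choose b) * zeta_bu (r + p + b) (q - b))"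
proof
  show "R p q r =
           (\<Sum>a<p. real ((q + a - 1) choose a) * zeta_bb (r + q + a) (p - a))
         + (\<Sum>b<q. real ((p + b - 1) choose b) * zeta_ub (r + p + b) (q - b))"
    unfolding R_def zeta_bb_def zeta_ub_def
    by (rule tornheim_sum_decomposition[where \<epsilon> = "\<lambda>m n. (-1) ^ n"
          and \<epsilon>\<^sub>1 = "\<lambda>M m. (-1) ^ (M + m)" and \<epsilon>\<^sub>2 = "\<lambda>M n. (-1) ^ n"])
       (use assms minus_one_power_reflect in auto)
  show "S p q r =
           (\<Sum>a<p. real ((q + a - 1) choose a) * zeta_bu (r + q + a) (p - a))
         + (\<Sum>b<q. real ((p + b - 1) choose b) * zeta_bu (r + p + b) (q - b))"
    unfolding S_def zeta_bu_def
    by (rule tornheim_sum_decomposition[where \<epsilon> = "\<lambda>m n. (-1) ^ (m + n)"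
          and \<epsilon>\<^sub>1 = "\<lambda>M m. (-1) ^ M" and \<epsilon>\<^sub>2 = "\<lambda>M n. (-1) ^ M"])
       (use assms in auto)
qed

end
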